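(* Let $\mathbb{Q}=\mathbb{Q}_1\cup\mathbb{Q}_2$ be a partition of the rationals into two disjoint dense sets, and let $f(x)=0$ for $x\in\mathbb{R}\setminus\mathbb{Q}$, $f(x)=1$ for $x\in\mathbb{Q}_1$, $f(x)=2$ for $x\in\mathbb{Q}_2$. Then $f$ has the Baire property, but $f$ is not the pointwise limit of any sequence of Świątkowski functions. Consequently, the class of pointwise limits of sequences of Świątkowski functions is strictly smaller than the class of functions with the Baire property.
   Context: $\mathrm{C}(f)$ denotes the set of continuity points of $f$. $f$ is a Świątkowski function if for all $a<b$ with $f(a)\ne f(b)$ there is $x\in(a,b)\cap\mathrm{C}(f)$ with $f(x)$ strictly between $f(a)$ and $f(b)$. A function has the Baire property if preimages of open sets are of the form $O\triangle M$ with $O$ open and $M$ meager. *)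

theory Defs
  imports "HOL-Analysis.Analysis"
begin

definition nowhere_dense :: "real set \<Rightarrow> bool" where
  "nowhere_dense A \<longleftrightarrow> interior (closure A) = {}"

definition meager :: "real set \<Rightarrow> bool" where
  "meager M \<longleftrightarrow> (\<exists>N :: nat \<Rightarrow> real set. (\<forall>n. nowhere_dense (N n)) \<and> M \<subseteq> (\<Union>n. N n))"

definition has_baire_property :: "(real \<Rightarrow> real) \<Rightarrow> bool" where
  "has_baire_property f \<longleftrightarrow>
     (\<forall>V. open V \<longrightarrow> (\<exists>U M. open U \<and> meager M \<and> f -` V = (U - M) \<union> (M - U)))"

definition continuity_points :: "(real \<Rightarrow> real) \<Rightarrow> real set" where
  "continuity_points f = {x. isCont f x}"

definition swiatkowski :: "(real \<Rightarrow> real) \<Rightarrow> bool" where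
  "swiatkowski f \<longleftrightarrow>
     (\<forall>a b. a < b \<and> f a \<noteq> f b \<longrightarrow>
        (\<exists>x \<in> {a<..<b} \<inter> continuity_points f.
            min (f a) (f b) < f x \<and> f x < max (f a) (f b)))"

definition pointwise_limit_of_swiatkowski :: "(real \<Rightarrow> real) \<Rightarrow> bool" where
  "pointwise_limit_of_swiatkowski f \<longleftrightarrow>
     (\<exists>g :: nat \<Rightarrow> real \<Rightarrow> real. (\<forall>n. swiatkowski (g n)) \<and>
        (\<forall>x. (\<lambda>n. g n x) \<longlonglongrightarrow> f x))"

end

theory Submission
  imports Defs
begin

text \<open>
  A Swiatkowski function has a continuity point in every open interval (on an interval
  without one it would be constant), so its discontinuity set is a meager
  \<open>F\<^sub>\<sigma>\<close> set and it has the Baire property. The Baire property survives pointwise limits,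
  because \<open>f -` V\<close> is a countable union of countable intersections of preimages of closed sets.
  The function \<open>f\<close> has the Baire property since it is constant off the meager set \<open>\<rat>\<close>.

  Suppose \<open>f\<close> were the limit of Swiatkowski functions \<open>g\<^sub>n\<close>. The sets
  \<open>{x. \<forall>m\<ge>N. g\<^sub>m x < 1/2}\<close> cover the irrationals, so by Baire's theorem one of them is dense
  in some interval. That interval contains \<open>q\<^sub>1 \<in> Q\<^sub>1\<close> and \<open>q\<^sub>2 \<in> Q\<^sub>2\<close>, and for large
  \<open>m \<ge> N\<close> the values \<open>g\<^sub>m q\<^sub>1 \<approx> 1\<close> and \<open>g\<^sub>m q\<^sub>2 \<approx> 2\<close> differ. The Swiatkowski property gives
  a continuity point between them with \<open>g\<^sub>m > 1/2\<close>, hence an open set where \<open>g\<^sub>m > 1/2\<close>,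
  which must meet the dense set \<open>{x. \<forall>m\<ge>N. g\<^sub>m x < 1/2}\<close>.
\<close>

section \<open>Meager sets\<close>

lemma meager_subset: "A \<subseteq> B \<Longrightarrow> meager B \<Longrightarrow> meager A"
  unfolding meager_def by blast

lemma meager_UN:
  assumes "\<And>n::nat. meager (M n)"
  shows "meager (\<Union>n. M n)"
proof -
  obtain N :: "nat \<Rightarrow> nat \<Rightarrow> real set"
    where N: "\<And>n k. nowhere_dense (N n k)" "\<And>n. M n \<subseteq> (\<Union>k. N n k)"
    using assms unfolding meager_def by metis
  define N' where "N' j = N (fst (prod_decode j)) (snd (prod_decode j))" for j
  have "(\<Union>n. M n) \<subseteq> (\<Union>j. N' j)"
  proof
    fix x assume "x \<in> (\<Union>n. M n)"
    then obtain n k where "x \<in> N n k" using N(2) by blast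
    then have "x \<in> N' (prod_encode (n, k))" by (simp add: N'_def)
    then show "x \<in> (\<Union>j. N' j)" by blast
  qed
  moreover have "\<forall>j. nowhere_dense (N' j)" using N(1) by (simp add: N'_def)
  ultimately show ?thesis unfolding meager_def by blast
qed

lemma meager_Un:
  assumes "meager A" "meager B"
  shows "meager (A \<union> B)"
proof -
  have "A \<union> B = (\<Union>n::nat. if n = 0 then A else B)"
    by (auto split: if_splits)
  then show ?thesis using assms meager_UN[of "\<lambda>n. if n = 0 then A else B"] by simp
qed

lemma countable_imp_meager:
  assumes "countable A"
  shows "meager A"
proof (cases "A = {}")
  case True
  then show ?thesis unfolding meager_def nowhere_dense_def by (intro exI[of _ "\<lambda>n. {}"]) simp
next
  case False
  then have "A \<subseteq> (\<Union>n. {from_nat_into A n})"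
    using from_nat_into_surj[OF assms] by blast
  then show ?thesis unfolding meager_def nowhere_dense_def
    by (intro exI[of _ "\<lambda>n. {from_nat_into A n}"]) simp
qed

lemma not_meager_UNIV: "\<not> meager (UNIV :: real set)"
proof
  assume "meager (UNIV :: real set)"
  then obtain N :: "nat \<Rightarrow> real set" where N: "\<And>n. nowhere_dense (N n)" "UNIV \<subseteq> (\<Union>n. N n)"
    unfolding meager_def by blast
  define G where "G = range (\<lambda>n. - closure (N n))"
  have "(UNIV :: real set) \<subseteq> closure (\<Inter>G)"
  proof (rule Baire)
    fix T assume "T \<in> G"
    then obtain n where T: "T = - closure (N n)" by (auto simp: G_def)
    then show "openin (top_of_set UNIV) T \<and> UNIV \<subseteq> closure T"
      using N(1)[of n] by (simp add: closure_complement nowhere_dense_def open_Compl)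
  qed (simp_all add: G_def)
  then have "\<Inter>G \<noteq> {}" by auto
  then obtain x where "x \<in> \<Inter>G" by blast
  then have "\<forall>n. x \<notin> N n" by (auto simp: G_def dest: subsetD[OF closure_subset])
  then show False using N(2) by blast
qed

lemma nowhere_dense_frontier_open:
  assumes "open U"
  shows "nowhere_dense (closure U - U)"
proof -
  have "interior (closure U - U) \<inter> closure U = {}"
    using open_Int_closure_eq_empty[of "interior (closure U - U)" U] interior_subset by blast
  then have "interior (closure U - U) = {}" using interior_subset by blast
  then show ?thesis using assms by (simp add: nowhere_dense_def closed_Diff)
qed

lemma ball_subset_closure_of_cover_of_comeager:
  assumes "meager M" and "(\<Union>N::nat. A N) \<union> M = UNIV"
  shows "\<exists>N x e. e > 0 \<and> ball x e \<subseteq> closure (A N)"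
proof -
  have "\<exists>N. \<not> nowhere_dense (A N)"
  proof (rule ccontr)
    assume "\<nexists>N. \<not> nowhere_dense (A N)"
    then have "meager (\<Union>N. A N)" unfolding meager_def by (intro exI[of _ A]) simp
    then have "meager ((\<Union>N. A N) \<union> M)" using assms(1) by (rule meager_Un)
    then show False using not_meager_UNIV assms(2) by simp
  qed
  then obtain N x where "x \<in> interior (closure (A N))"
    unfolding nowhere_dense_def by blast
  then show ?thesis
    using open_contains_ball[of "interior (closure (A N))"] interior_subset by blast
qed

section \<open>Sets with the Baire property\<close>

definition baire_set :: "real set \<Rightarrow> bool" where
  "baire_set A \<longleftrightarrow> (\<exists>U. open U \<and> meager (sym_diff A U))"

lemma has_baire_property_iff_baire_set:
  "has_baire_property f \<longleftrightarrow> (\<forall>V. open V \<longrightarrow> baire_set (f -` V))"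
proof -
  have "baire_set A \<longleftrightarrow> (\<exists>U M. open U \<and> meager M \<and> A = sym_diff U M)" for A
  proof
    assume "baire_set A"
    then obtain U where "open U" "meager (sym_diff A U)" unfolding baire_set_def by blast
    moreover have "A = sym_diff U (sym_diff A U)" by blast
    ultimately show "\<exists>U M. open U \<and> meager M \<and> A = sym_diff U M" by blast
  next
    assume "\<exists>U M. open U \<and> meager M \<and> A = sym_diff U M"
    then obtain U M where "open U" "meager M" "A = sym_diff U M" by blast
    moreover from \<open>A = _\<close> have "sym_diff A U = M" by blast
    ultimately show "baire_set A" unfolding baire_set_def by auto
  qed
  then show ?thesis unfolding has_baire_property_def by blast
qed

lemma meager_imp_baire_set: "meager A \<Longrightarrow> baire_set A"
  unfolding baire_set_def by (intro exI[of _ "{}"]) simp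

lemma baire_set_Compl:
  assumes "baire_set A"
  shows "baire_set (- A)"
proof -
  obtain U where U: "open U" "meager (sym_diff A U)"
    using assms unfolding baire_set_def by blast
  have "meager (closure U - U)"
    using nowhere_dense_frontier_open[OF U(1)] unfolding meager_def
    by (intro exI[of _ "\<lambda>n. closure U - U"]) simp
  then have "meager (sym_diff A U \<union> (closure U - U))"
    using U(2) by (rule meager_Un[rotated])
  moreover have "sym_diff (- A) (- closure U) \<subseteq> sym_diff A U \<union> (closure U - U)"
    using closure_subset[of U] by blast
  ultimately have "meager (sym_diff (- A) (- closure U))" by (rule meager_subset[rotated])
  then show ?thesis unfolding baire_set_def by (intro exI[of _ "- closure U"]) auto
qed

lemma baire_set_UN:
  assumes "\<And>n::nat. baire_set (A n)"
  shows "baire_set (\<Union>n. A n)"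
proof -
  obtain U :: "nat \<Rightarrow> real set" where U: "\<And>n. open (U n)" "\<And>n. meager (sym_diff (A n) (U n))"
    using assms unfolding baire_set_def by metis
  have "meager (\<Union>n. sym_diff (A n) (U n))" using U(2) by (rule meager_UN)
  then have "meager (sym_diff (\<Union>n. A n) (\<Union>n. U n))"
    by (rule meager_subset[rotated]) blast
  moreover have "open (\<Union>n. U n)" using U(1) by auto
  ultimately show ?thesis unfolding baire_set_def by blast
qed

lemma baire_set_INT:
  assumes "\<And>n::nat. baire_set (A n)"
  shows "baire_set (\<Inter>n. A n)"
proof -
  have "baire_set (- (\<Union>n. - A n))"
    using assms by (intro baire_set_Compl baire_set_UN) simp
  then show ?thesis by simp
qed

lemma meager_discontinuities_imp_has_baire_property:
  assumes "meager (- continuity_points g)"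
  shows "has_baire_property g"
  unfolding has_baire_property_iff_baire_set baire_set_def
proof (intro allI impI)
  fix V :: "real set" assume V: "open V"
  let ?U = "interior (g -` V)"
  have "g -` V - ?U \<subseteq> - continuity_points g"
  proof
    fix x assume x: "x \<in> g -` V - ?U"
    show "x \<in> - continuity_points g"
    proof
      assume "x \<in> continuity_points g"
      then obtain S where "open S" "x \<in> S" "\<forall>y\<in>S. g y \<in> V"
        using x V unfolding continuity_points_def continuous_at_open by blast
      then have "S \<subseteq> ?U" by (intro interior_maximal) auto
      then show False using x \<open>x \<in> S\<close> by blast
    qed
  qed
  then have "sym_diff (g -` V) ?U \<subseteq> - continuity_points g"
    using interior_subset[of "g -` V"] by blast
  then have "meager (sym_diff (g -` V) ?U)" using assms by (rule meager_subset)
  then show "\<exists>U. open U \<and> meager (sym_diff (g -` V) U)" by blast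
qed

lemma constant_off_meager_imp_has_baire_property:
  assumes "meager {x. f x \<noteq> c}"
  shows "has_baire_property f"
  unfolding has_baire_property_iff_baire_set
proof (intro allI impI)
  fix V :: "real set"
  show "baire_set (f -` V)"
  proof (cases "c \<in> V")
    case True
    then have "- (f -` V) \<subseteq> {x. f x \<noteq> c}" by auto
    then have "baire_set (- (- (f -` V)))"
      using assms by (intro baire_set_Compl meager_imp_baire_set) (rule meager_subset)
    then show ?thesis by simp
  next
    case False
    then have "f -` V \<subseteq> {x. f x \<noteq> c}" by auto
    then show ?thesis using assms by (intro meager_imp_baire_set) (rule meager_subset)
  qed
qed

section \<open>The Baire property is preserved under pointwise limits\<close>

lemma closed_ball_subset_centres: "closed {y. ball y r \<subseteq> V}"
proof -
  have "{y. ball y r \<subseteq> V} = (\<Inter>z\<in>-V. - ball z r)"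
    by (auto simp: dist_commute)
  then show ?thesis by (auto intro!: closed_INT)
qed

lemma LIMSEQ_in_open_iff_eventually_ball_subset:
  fixes X :: "nat \<Rightarrow> 'a::metric_space"
  assumes "open V" and "X \<longlonglongrightarrow> l"
  shows "l \<in> V \<longleftrightarrow> (\<exists>k. \<forall>\<^sub>F n in sequentially. ball (X n) (inverse (Suc k)) \<subseteq> V)"
proof
  assume "l \<in> V"
  then obtain e where e: "e > 0" "ball l e \<subseteq> V" using assms(1) openE by blast
  obtain k where k: "inverse (real (Suc k)) < e / 2" using reals_Archimedean[of "e/2"] e by auto
  have "\<forall>\<^sub>F n in sequentially. dist (X n) l < inverse (Suc k)"
    using assms(2) by (rule tendstoD) simp
  then have "\<forall>\<^sub>F n in sequentially. ball (X n) (inverse (Suc k)) \<subseteq> V"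
  proof eventually_elim
    case (elim n)
    have "ball (X n) (inverse (Suc k)) \<subseteq> ball l e"
    proof
      fix z assume z: "z \<in> ball (X n) (inverse (Suc k))"
      have "dist l z \<le> dist l (X n) + dist (X n) z" by (rule dist_triangle)
      then show "z \<in> ball l e" using elim z k by (simp add: dist_commute)
    qed
    then show ?case using e(2) by blast
  qed
  then show "\<exists>k. \<forall>\<^sub>F n in sequentially. ball (X n) (inverse (Suc k)) \<subseteq> V" by blast
next
  assume "\<exists>k. \<forall>\<^sub>F n in sequentially. ball (X n) (inverse (Suc k)) \<subseteq> V"
  then obtain k where "\<forall>\<^sub>F n in sequentially. ball (X n) (inverse (Suc k)) \<subseteq> V" by blast
  moreover have "\<forall>\<^sub>F n in sequentially. dist (X n) l < inverse (Suc k)"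
    using assms(2) by (rule tendstoD) simp
  ultimately have "\<forall>\<^sub>F n in sequentially. l \<in> V"
    by eventually_elim (auto simp: dist_commute)
  then show "l \<in> V" by simp
qed

lemma has_baire_property_LIMSEQ:
  fixes g :: "nat \<Rightarrow> real \<Rightarrow> real"
  assumes bp: "\<And>n. has_baire_property (g n)"
    and lim: "\<And>x. (\<lambda>n. g n x) \<longlonglongrightarrow> f x"
  shows "has_baire_property f"
  unfolding has_baire_property_iff_baire_set
proof (intro allI impI)
  fix V :: "real set" assume V: "open V"
  define F where "F k = {y. ball y (inverse (Suc k)) \<subseteq> V}" for k :: nat
  have "baire_set (g n -` F k)" for n k
  proof -
    have "baire_set (- (g n -` (- F k)))"
      using bp[of n] closed_ball_subset_centres
      by (auto intro!: baire_set_Compl simp: has_baire_property_iff_baire_set F_def closed_def)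
    then show ?thesis by (simp add: vimage_Compl)
  qed
  then have "baire_set (\<Union>k. \<Union>N. \<Inter>n. g (n + N) -` F k)"
    by (intro baire_set_UN baire_set_INT)
  moreover have "f -` V = (\<Union>k. \<Union>N. \<Inter>n. g (n + N) -` F k)"
  proof -
    have "(\<Inter>n. g (n + N) -` F k) = {x. \<forall>n\<ge>N. g n x \<in> F k}" for N k
      by (auto simp: le_iff_add add.commute)
    then show ?thesis
      using LIMSEQ_in_open_iff_eventually_ball_subset[OF V lim]
      by (auto simp: F_def eventually_sequentially) blast
  qed
  ultimately show "baire_set (f -` V)" by simp
qed

section \<open>Continuity points of real functions\<close>

definition oscillation_below :: "(real \<Rightarrow> real) \<Rightarrow> real \<Rightarrow> real set" where
  "oscillation_below g e = {x. \<exists>d>0. \<forall>y\<in>ball x d. \<forall>z\<in>ball x d. \<bar>g y - g z\<bar> < e}"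

lemma open_oscillation_below: "open (oscillation_below g e)"
  unfolding open_contains_ball
proof
  fix x assume "x \<in> oscillation_below g e"
  then obtain d where d: "d > 0" "\<forall>y\<in>ball x d. \<forall>z\<in>ball x d. \<bar>g y - g z\<bar> < e"
    unfolding oscillation_below_def by blast
  have "ball x' (d/2) \<subseteq> ball x d" if "x' \<in> ball x (d/2)" for x'
  proof
    fix y assume "y \<in> ball x' (d/2)"
    then show "y \<in> ball x d" using that dist_triangle[of x y x'] by auto
  qed
  then have "ball x (d/2) \<subseteq> oscillation_below g e"
    using d unfolding oscillation_below_def by (fastforce intro: exI[of _ "d/2"])
  then show "\<exists>r>0. ball x r \<subseteq> oscillation_below g e" using d(1) by (intro exI[of _ "d/2"]) auto
qed

lemma oscillation_below_mono:
  assumes "e \<le> e'"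
  shows "oscillation_below g e \<subseteq> oscillation_below g e'"
proof
  fix x assume "x \<in> oscillation_below g e"
  then obtain d where "d > 0" "\<forall>y\<in>ball x d. \<forall>z\<in>ball x d. \<bar>g y - g z\<bar> < e"
    unfolding oscillation_below_def by blast
  then show "x \<in> oscillation_below g e'"
    unfolding oscillation_below_def using assms by (blast intro: less_le_trans)
qed

lemma isCont_imp_oscillation_below:
  assumes "isCont g x" "e > 0"
  shows "x \<in> oscillation_below g e"
proof -
  obtain d where d: "d > 0" "\<And>y. dist y x < d \<Longrightarrow> dist (g y) (g x) < e / 2"
    using assms unfolding continuous_at_eps_delta by (metis half_gt_zero)
  have "\<bar>g y - g z\<bar> < e" if "y \<in> ball x d" "z \<in> ball x d" for y z
    using d(2)[of y] d(2)[of z] that by (simp add: dist_commute dist_real_def) (smt (verit))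
  then show ?thesis using d(1) unfolding oscillation_below_def by blast
qed

lemma oscillation_below_imp_isCont:
  assumes "\<And>e. e > 0 \<Longrightarrow> x \<in> oscillation_below g e"
  shows "isCont g x"
  unfolding continuous_at_eps_delta
proof (intro allI impI)
  fix e :: real assume "e > 0"
  then obtain d where "d > 0" "\<forall>y\<in>ball x d. \<forall>z\<in>ball x d. \<bar>g y - g z\<bar> < e"
    using assms unfolding oscillation_below_def by blast
  then show "\<exists>d>0. \<forall>y. dist y x < d \<longrightarrow> dist (g y) (g x) < e"
    by (metis centre_in_ball dist_commute dist_real_def mem_ball)
qed

lemma meager_discontinuities_if_dense_continuity_points:
  assumes "\<And>a b. a < b \<Longrightarrow> \<exists>c\<in>{a<..<b}. isCont g c"
  shows "meager (- continuity_points g)"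
proof -
  define Osc where "Osc k = oscillation_below g (inverse (Suc k))" for k :: nat
  have "nowhere_dense (- Osc k)" for k
  proof -
    have "interior (- Osc k) = {}"
    proof (rule ccontr)
      assume "interior (- Osc k) \<noteq> {}"
      then obtain x e where e: "e > 0" "ball x e \<subseteq> - Osc k"
        by (meson all_not_in_conv open_contains_ball open_interior interior_subset subset_trans)
      obtain c where c: "c \<in> {x - e<..<x + e}" "isCont g c"
        using assms[of "x - e" "x + e"] e(1) by auto
      then have "c \<in> ball x e" by (auto simp: dist_real_def)
      then show False using isCont_imp_oscillation_below[OF c(2)] e(2) Osc_def by auto
    qed
    then show ?thesis
      by (simp add: nowhere_dense_def Osc_def open_oscillation_below closed_Compl)
  qed
  moreover have "- continuity_points g \<subseteq> (\<Union>k. - Osc k)"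
  proof (rule subsetI, rule ccontr)
    fix x assume x: "x \<in> - continuity_points g" and "x \<notin> (\<Union>k. - Osc k)"
    then have "x \<in> oscillation_below g e" if "e > 0" for e
    proof -
      obtain k where "inverse (Suc k) < e" using reals_Archimedean \<open>e > 0\<close> by blast
      then show ?thesis
        using \<open>x \<notin> _\<close> oscillation_below_mono[of "inverse (Suc k)" e g] by (auto simp: Osc_def)
    qed
    then have "isCont g x" by (rule oscillation_below_imp_isCont)
    then show False using x by (simp add: continuity_points_def)
  qed
  ultimately show ?thesis unfolding meager_def by (intro exI[of _ "\<lambda>k. - Osc k"]) simp
qed

section \<open>Swiatkowski functions\<close>

lemma swiatkowski_has_continuity_point:
  assumes sw: "swiatkowski g" and "a < b"
  shows "\<exists>c\<in>{a<..<b}. isCont g c"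
proof (rule ccontr)
  assume no: "\<not> (\<exists>c\<in>{a<..<b}. isCont g c)"
  have const: "g x = g y" if "x \<in> {a<..<b}" "y \<in> {a<..<b}" "x < y" for x y
  proof (rule ccontr)
    assume "g x \<noteq> g y"
    then have "\<exists>c\<in>{x<..<y} \<inter> continuity_points g. min (g x) (g y) < g c \<and> g c < max (g x) (g y)"
      using sw \<open>x < y\<close> unfolding swiatkowski_def by blast
    then obtain c where "c \<in> {x<..<y}" "isCont g c"
      unfolding continuity_points_def by blast
    moreover from \<open>c \<in> {x<..<y}\<close> that(1,2) have "c \<in> {a<..<b}" by simp
    ultimately show False using no by blast
  qed
  let ?m = "(a + b) / 2"
  have m: "?m \<in> {a<..<b}" using \<open>a < b\<close> by simp
  have "\<forall>\<^sub>F x in at ?m. x \<in> {a<..<b}"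
    using m by (intro eventually_at_in_open') auto
  then have "\<forall>\<^sub>F x in at ?m. g x = g ?m"
  proof eventually_elim
    case (elim x)
    show ?case
    proof (cases x ?m rule: linorder_cases)
      case less
      with elim m show ?thesis by (rule const)
    next
      case greater
      with m elim show ?thesis by (rule const[symmetric])
    qed (simp only:)
  qed
  then have "isCont g ?m" unfolding isCont_def by (rule tendsto_eventually)
  then show False using no m by blast
qed

lemma swiatkowski_imp_has_baire_property:
  "swiatkowski g \<Longrightarrow> has_baire_property g"
  by (intro meager_discontinuities_imp_has_baire_property
      meager_discontinuities_if_dense_continuity_points swiatkowski_has_continuity_point)

lemma pointwise_limit_of_swiatkowski_imp_has_baire_property:
  "pointwise_limit_of_swiatkowski h \<Longrightarrow> has_baire_property h"
  unfolding pointwise_limit_of_swiatkowski_def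
  using has_baire_property_LIMSEQ swiatkowski_imp_has_baire_property by blast

lemma swiatkowski_open_above:
  assumes sw: "swiatkowski g" and "g x \<noteq> g y" "t < g x" "t < g y"
  shows "\<exists>U. open U \<and> U \<noteq> {} \<and> U \<subseteq> {min x y<..<max x y} \<and> (\<forall>z\<in>U. t < g z)"
proof -
  define a b where "a = min x y" and "b = max x y"
  have "x \<noteq> y" using assms(2) by auto
  then have "a < b" "g a \<noteq> g b" "t < min (g a) (g b)"
    using assms by (auto simp: a_def b_def min_def max_def)
  then obtain c where c: "c \<in> {a<..<b}" "isCont g c" "min (g a) (g b) < g c"
    using sw unfolding swiatkowski_def continuity_points_def by blast
  moreover have "g c \<in> {t<..}" using less_trans[OF \<open>t < min _ _\<close> c(3)] by simp
  ultimately obtain S where S: "open S" "c \<in> S" "\<forall>z\<in>S. g z \<in> {t<..}"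
    using c(2)[unfolded continuous_at_open, rule_format, of "{t<..}"] by auto
  show ?thesis
    using S c(1) unfolding a_def[symmetric] b_def[symmetric]
    by (intro exI[of _ "S \<inter> {a<..<b}"]) auto
qed

lemma not_pointwise_limit_of_swiatkowski:
  fixes f :: "real \<Rightarrow> real"
  assumes meager: "meager {x. f x \<noteq> 0}"
    and dense: "closure Q1 = UNIV" "closure Q2 = UNIV"
    and on_Q: "\<forall>x\<in>Q1. f x = 1" "\<forall>x\<in>Q2. f x = 2"
  shows "\<not> pointwise_limit_of_swiatkowski f"
proof
  assume "pointwise_limit_of_swiatkowski f"
  then obtain g where sw: "\<And>n. swiatkowski (g n)" and lim: "\<And>x. (\<lambda>n. g n x) \<longlonglongrightarrow> f x"
    unfolding pointwise_limit_of_swiatkowski_def by blast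
  define A where "A N = {x. \<forall>m\<ge>N. g m x < 1/2}" for N
  have "- {x. f x \<noteq> 0} \<subseteq> (\<Union>N. A N)"
  proof
    fix x assume "x \<in> - {x. f x \<noteq> 0}"
    then have "\<forall>\<^sub>F m in sequentially. g m x < 1/2"
      using order_tendstoD(2)[OF lim[of x], of "1/2"] by simp
    then show "x \<in> (\<Union>N. A N)" by (auto simp: A_def eventually_sequentially)
  qed
  then have "(\<Union>N. A N) \<union> {x. f x \<noteq> 0} = UNIV" by blast
  then obtain N x0 e where e: "e > 0" "ball x0 e \<subseteq> closure (A N)"
    using ball_subset_closure_of_cover_of_comeager[OF meager] by blast
  have "ball x0 e \<inter> Q1 \<noteq> {}" "ball x0 e \<inter> Q2 \<noteq> {}"
    using open_Int_closure_eq_empty[of "ball x0 e" Q1] open_Int_closure_eq_empty[of "ball x0 e" Q2]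
      dense e(1) by auto
  then obtain q1 q2 where q: "q1 \<in> Q1" "q2 \<in> Q2" "q1 \<in> ball x0 e" "q2 \<in> ball x0 e"
    by blast
  then have "f q1 = 1" "f q2 = 2" using on_Q by auto
  then have "\<forall>\<^sub>F m in sequentially. 1/2 < g m q1" "\<forall>\<^sub>F m in sequentially. g m q1 < 3/2"
    "\<forall>\<^sub>F m in sequentially. 3/2 < g m q2"
    using order_tendstoD(1)[OF lim[of q1], of "1/2"] order_tendstoD(2)[OF lim[of q1], of "3/2"]
      order_tendstoD(1)[OF lim[of q2], of "3/2"] by simp_all
  then have "\<forall>\<^sub>F m in sequentially. N \<le> m \<and> 1/2 < g m q1 \<and> g m q1 < 3/2 \<and> 3/2 < g m q2"
    using eventually_ge_at_top[of N] by eventually_elim blast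
  from eventually_happens'[OF sequentially_bot this]
  obtain m where m: "N \<le> m" "1/2 < g m q1" "g m q1 < 3/2" "3/2 < g m q2" by blast
  then have "g m q1 \<noteq> g m q2" "1/2 < g m q2" by linarith+
  then obtain U where U: "open U" "U \<noteq> {}" "U \<subseteq> {min q1 q2<..<max q1 q2}" "\<forall>z\<in>U. 1/2 < g m z"
    using swiatkowski_open_above[OF sw[of m] _ m(2)] by blast
  have "{min q1 q2<..<max q1 q2} \<subseteq> ball x0 e"
    using q(3,4) by (auto simp: dist_real_def min_def max_def)
  then obtain y where "y \<in> U" "y \<in> A N"
    using U(1-3) e(2) open_Int_closure_eq_empty[of U "A N"] by blast
  then have "g m y < 1/2" "1/2 < g m y" using U(4) m(1) unfolding A_def by blast+
  then show False by linarith
qed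

theorem mainTheorem8:
  fixes Q1 Q2 :: "real set" and f :: "real \<Rightarrow> real"
  assumes "Q1 \<union> Q2 = \<rat>" and "Q1 \<inter> Q2 = {}"
    and "closure Q1 = UNIV" and "closure Q2 = UNIV"
    and "\<And>x. f x = (if x \<notin> \<rat> then 0 else if x \<in> Q1 then 1 else 2)"
  shows "has_baire_property f \<and> \<not> pointwise_limit_of_swiatkowski f \<and>
         {h. pointwise_limit_of_swiatkowski h} \<subset> {h. has_baire_property h}"
proof -
  have "{x. f x \<noteq> 0} \<subseteq> \<rat>" using assms(5) by auto
  then have meager: "meager {x. f x \<noteq> 0}"
    using countable_imp_meager[OF countable_rat] by (rule meager_subset)
  then have bp: "has_baire_property f"
    by (rule constant_off_meager_imp_has_baire_property)
  have "\<not> pointwise_limit_of_swiatkowski f"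
    using assms by (intro not_pointwise_limit_of_swiatkowski[OF meager, of Q1 Q2]) auto
  moreover have "{h. pointwise_limit_of_swiatkowski h} \<subseteq> {h. has_baire_property h}"
    using pointwise_limit_of_swiatkowski_imp_has_baire_property by blast
  ultimately show ?thesis using bp by blast
qed

end
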